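(* Let $t,w,x,y,z\in \mathbb{Z}^+$, let $r=0.8$ and $c=1/(8^r-6^r)\approx 0.922$. Then: (i) If $x\geq 8.956z$ and $y\geq 1.036z$ then $x^r+y^r\geq (x+y+z)^r$. (ii) If $x\leq 10.174y$ then $cx^r+y^r\geq(x+y)^r$. (iii) If $0.5y\leq x\leq 8.884y$ then $x^r+y^r\geq (1+1/10.174)^r(x+y)^r$. (iv) If $z<1.98(t+w+x+y)$ and $0<t\leq2.072\cdot\min\{w/1.036, x,y,z/5.884\}$ then $w^r+x^r+y^r+cz^r\geq(t+w+x+y+z)^r$. (v) If $w\leq \min\{x,y,z\}$ then $cx^r+y^r+z^r\geq c(w+x+y+z)^r$. (vi) If $x\geq 6z$ and $y\geq z$ then $cx^r+y^r\geq c(x+y+z)^r$.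
   Context: $\mathbb{Z}^+$ denotes the set of non-negative integers. *)

theory Defs
  imports Complex_Main
begin

definition rr :: real where "rr = 0.8"

definition cc :: real where "cc = 1 / (8 powr rr - 6 powr rr)"

end

theory Submission
  imports Defs
begin

(* Since rr = 4/5, every value a powr rr is pinned down by comparing fifth and fourth powers,
   so all numerical constants are checked in exact rational arithmetic.  The function
   u \<mapsto> a u^r - d (u + S)^r has a derivative of the sign of a^5 (u + S) - d^5 u, so for
   a \<le> d it increases and then decreases, and on an interval it is smallest at an endpoint;
   for a = d = 1 this is concavity: lowering a variable x lowers x^r - (x + K)^r.  Each part is
   proved by pushing the variables down to the extremal values allowed by its hypotheses,
   where the inequality is homogeneous and reduces to a numerical check. *)

lemma powr_rr_power5: "0 \<le> a \<Longrightarrow> (a powr rr) ^ 5 = (a::real) ^ 4"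
  by (cases "a = 0") (simp_all add: powr_power rr_def)

lemma ge_powr_rr_if_power5_le: "0 \<le> a \<Longrightarrow> b ^ 5 \<le> (a::real) ^ 4 \<Longrightarrow> b \<le> a powr rr"
  by (rule power_le_imp_le_base[where n = 4]) (simp_all add: powr_rr_power5)

lemma powr_rr_le_if_power4_le: "0 \<le> a \<Longrightarrow> 0 \<le> b \<Longrightarrow> (a::real) ^ 4 \<le> b ^ 5 \<Longrightarrow> a powr rr \<le> b"
  by (rule power_le_imp_le_base[where n = 4]) (simp_all add: powr_rr_power5)

lemma powr_rr_minus_1_power5: "0 < v \<Longrightarrow> (v powr (rr - 1)) ^ 5 = 1 / (v::real)"
  by (simp add: powr_power rr_def)

lemma mult_powr_rr_minus_1_le:
  fixes a b v w :: real
  assumes "0 < a" "0 < b" "0 < v" "0 < w" "b ^ 5 * v \<le> a ^ 5 * w"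
  shows "b * w powr (rr - 1) \<le> a * v powr (rr - 1)"
proof (rule power_le_imp_le_base[where n = 4])
  have "(b * w powr (rr - 1)) ^ Suc 4 = b ^ 5 / w"
    using assms by (simp add: power_mult_distrib powr_rr_minus_1_power5)
  also have "\<dots> \<le> a ^ 5 / v"
    using assms by (simp add: divide_simps mult.commute)
  also have "\<dots> = (a * v powr (rr - 1)) ^ Suc 4"
    using assms by (simp add: power_mult_distrib powr_rr_minus_1_power5)
  finally show "(b * w powr (rr - 1)) ^ Suc 4 \<le> (a * v powr (rr - 1)) ^ Suc 4" .
qed (use assms in simp)

definition rr_gap :: "real \<Rightarrow> real \<Rightarrow> real \<Rightarrow> real \<Rightarrow> real" where
  "rr_gap a d S u = a * u powr rr - d * (u + S) powr rr"

lemma rr_gap_has_real_derivative: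
  assumes "0 < u" "0 \<le> S"
  shows "(rr_gap a d S has_real_derivative
          rr * (a * u powr (rr - 1) - d * (u + S) powr (rr - 1))) (at u)"
  unfolding rr_gap_def[abs_def] using assms
  by (auto intro!: derivative_eq_intros simp: algebra_simps)

lemma continuous_on_rr_gap: "0 \<le> p \<Longrightarrow> 0 \<le> S \<Longrightarrow> continuous_on {p..q} (rr_gap a d S)"
  unfolding rr_gap_def[abs_def]
  by (intro continuous_on_diff continuous_on_mult continuous_on_const continuous_on_powr'
      continuous_on_add continuous_on_id) (auto simp: rr_def)

lemma rr_gap_mono:
  assumes "0 < a" "0 < d" "0 \<le> S" "0 \<le> p" "p \<le> q"
    and sign: "\<And>u. p < u \<Longrightarrow> u < q \<Longrightarrow> d ^ 5 * u \<le> a ^ 5 * (u + S)"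
  shows "rr_gap a d S p \<le> rr_gap a d S q"
proof (rule DERIV_nonneg_imp_increasing_open[OF \<open>p \<le> q\<close>])
  fix u assume u: "p < u" "u < q"
  have "d * (u + S) powr (rr - 1) \<le> a * u powr (rr - 1)"
    using mult_powr_rr_minus_1_le[of a d u "u + S"] assms u sign[OF u] by simp
  then show "\<exists>y. (rr_gap a d S has_real_derivative y) (at u) \<and> 0 \<le> y"
    using rr_gap_has_real_derivative[of u S a d] u assms by (auto simp: rr_def)
qed (use assms continuous_on_rr_gap in auto)

lemma rr_gap_antimono:
  assumes "0 < a" "0 < d" "0 \<le> S" "0 \<le> p" "p \<le> q"
    and sign: "\<And>u. p < u \<Longrightarrow> u < q \<Longrightarrow> a ^ 5 * (u + S) \<le> d ^ 5 * u"
  shows "rr_gap a d S q \<le> rr_gap a d S p"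
proof (rule DERIV_nonpos_imp_decreasing_open[OF \<open>p \<le> q\<close>])
  fix u assume u: "p < u" "u < q"
  have "a * u powr (rr - 1) \<le> d * (u + S) powr (rr - 1)"
    using mult_powr_rr_minus_1_le[of d a "u + S" u] assms u sign[OF u] by simp
  then show "\<exists>y. (rr_gap a d S has_real_derivative y) (at u) \<and> y \<le> 0"
    using rr_gap_has_real_derivative[of u S a d] u assms by (auto simp: rr_def)
qed (use assms continuous_on_rr_gap in auto)

lemma rr_gap_ge_min_endpoints:
  assumes "0 < a" "a \<le> d" "0 \<le> S" "0 \<le> p" "p \<le> s" "s \<le> q"
  shows "min (rr_gap a d S p) (rr_gap a d S q) \<le> rr_gap a d S s"
proof -
  have "0 \<le> d ^ 5 - a ^ 5" using assms power_mono[of a d 5] by simp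
  then consider "(d ^ 5 - a ^ 5) * s \<le> a ^ 5 * S" | "a ^ 5 * S \<le> (d ^ 5 - a ^ 5) * s"
    by linarith
  then show ?thesis
  proof cases
    case 1
    have "rr_gap a d S p \<le> rr_gap a d S s"
    proof (rule rr_gap_mono)
      fix u assume "p < u" "u < s"
      then have "(d ^ 5 - a ^ 5) * u \<le> (d ^ 5 - a ^ 5) * s"
        using \<open>0 \<le> d ^ 5 - a ^ 5\<close> by (intro mult_left_mono) auto
      then show "d ^ 5 * u \<le> a ^ 5 * (u + S)" using 1 by (simp add: algebra_simps)
    qed (use assms in auto)
    then show ?thesis by simp
  next
    case 2
    have "rr_gap a d S q \<le> rr_gap a d S s"
    proof (rule rr_gap_antimono)
      fix u assume "s < u" "u < q"
      then have "(d ^ 5 - a ^ 5) * s \<le> (d ^ 5 - a ^ 5) * u"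
        using \<open>0 \<le> d ^ 5 - a ^ 5\<close> by (intro mult_left_mono) auto
      then show "a ^ 5 * (u + S) \<le> d ^ 5 * u" using 2 by (simp add: algebra_simps)
    qed (use assms in auto)
    then show ?thesis by simp
  qed
qed

lemma powr_rr_increment_antimono:
  fixes K p q :: real
  assumes "0 \<le> K" "0 \<le> p" "p \<le> q"
  shows "(q + K) powr rr - q powr rr \<le> (p + K) powr rr - p powr rr"
  using rr_gap_mono[of 1 1 K p q] assms by (simp add: rr_gap_def)

lemma powr_rr_8_minus_6_bounds:
  "1.085068930 \<le> 8 powr rr - 6 powr rr" "8 powr rr - 6 powr rr \<le> (1.085068932::real)"
proof -
  have "5.278031643 \<le> (8::real) powr rr" "4.192962712 \<le> (6::real) powr rr"
    by (rule ge_powr_rr_if_power5_le; simp add: power_divide)+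
  moreover have "(8::real) powr rr \<le> 5.278031644" "(6::real) powr rr \<le> 4.192962713"
    by (rule powr_rr_le_if_power4_le; simp add: power_divide)+
  ultimately show "1.085068930 \<le> 8 powr rr - 6 powr rr" "8 powr rr - 6 powr rr \<le> (1.085068932::real)"
    by simp_all
qed

lemma cc_bounds: "0.921600435 \<le> cc" "cc \<le> 0.921600437"
  using powr_rr_8_minus_6_bounds unfolding cc_def by (simp_all add: le_divide_eq divide_le_eq)

lemma cc_pos: "0 < cc"
  using cc_bounds by simp

lemma cc_le_1: "cc \<le> 1"
  using cc_bounds by simp

lemma cc_mult_powr_rr_8_minus_6: "cc * 8 powr rr - cc * 6 powr rr = 1"
  using powr_rr_8_minus_6_bounds unfolding cc_def
  by (simp add: diff_divide_distrib[symmetric] right_diff_distrib[symmetric])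

lemma lemma2p4_real_i:
  fixes x y z :: real
  assumes "0 \<le> z" "8.956 * z \<le> x" "1.036 * z \<le> y"
  shows "(x + y + z) powr rr \<le> x powr rr + y powr rr"
proof -
  have lower_x: "(x + (y + z)) powr rr - x powr rr \<le> (8.956 * z + (y + z)) powr rr - (8.956 * z) powr rr"
    by (rule powr_rr_increment_antimono) (use assms in auto)
  have lower_y: "(y + 8.956 * z + z) powr rr - y powr rr
      \<le> (1.036 * z + 8.956 * z + z) powr rr - (1.036 * z) powr rr"
    using powr_rr_increment_antimono[of "8.956 * z + z" "1.036 * z" y] assms by (simp add: add.assoc)
  have "(10.992::real) powr rr \<le> 8.956 powr rr + 1.036 powr rr"
  proof -
    have "(10.992::real) powr rr \<le> 6.8055210"
      by (rule powr_rr_le_if_power4_le) (simp_all add: power_divide)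
    moreover have "5.7768523 \<le> (8.956::real) powr rr" "1.0286977 \<le> (1.036::real) powr rr"
      by (rule ge_powr_rr_if_power5_le; simp add: power_divide)+
    ultimately show ?thesis by simp
  qed
  then have "10.992 powr rr * z powr rr \<le> (8.956 powr rr + 1.036 powr rr) * z powr rr"
    by (rule mult_right_mono) simp
  then have "(10.992 * z) powr rr \<le> (8.956 * z) powr rr + (1.036 * z) powr rr"
    by (simp only: powr_mult distrib_right)
  with lower_x lower_y show ?thesis
    by (simp add: algebra_simps)
qed

lemma rr_gap_homogeneous:
  assumes "0 < y" "0 \<le> x"
  shows "a * x powr rr - d * (x + y) powr rr = y powr rr * rr_gap a d 1 (x / y)"
proof -
  have "x = x / y * y" "x + y = (x / y + 1) * y"
    using assms by (simp_all add: field_simps)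
  then have "x powr rr = (x / y) powr rr * y powr rr" "(x + y) powr rr = (x / y + 1) powr rr * y powr rr"
    by (metis powr_mult)+
  then show ?thesis
    by (simp add: rr_gap_def algebra_simps)
qed

lemma powr_rr_ge_by_ratio_bounds:
  assumes "0 < a" "a \<le> d" "0 \<le> lo" "0 \<le> y" "lo * y \<le> x" "x \<le> hi * y"
    and "-1 \<le> rr_gap a d 1 lo" "-1 \<le> rr_gap a d 1 hi"
  shows "d * (x + y) powr rr \<le> a * x powr rr + y powr rr"
proof (cases "y = 0")
  case True
  with assms show ?thesis by (simp add: rr_def)
next
  case False
  with assms have "0 < y" "0 \<le> x" "lo \<le> x / y" "x / y \<le> hi"
    by (auto simp: field_simps intro: order_trans[OF mult_nonneg_nonneg])
  with assms have "-1 \<le> rr_gap a d 1 (x / y)"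
    using rr_gap_ge_min_endpoints[of a d 1 lo "x / y" hi] by linarith
  then have "-1 * y powr rr \<le> y powr rr * rr_gap a d 1 (x / y)"
    using mult_right_mono[of "-1" "rr_gap a d 1 (x / y)" "y powr rr"] by (simp add: mult.commute)
  with rr_gap_homogeneous[OF \<open>0 < y\<close> \<open>0 \<le> x\<close>, of a d] show ?thesis
    by linarith
qed

lemma lemma2p4_real_ii:
  fixes x y :: real
  assumes "0 \<le> y" "0 \<le> x" "x \<le> 10.174 * y"
  shows "(x + y) powr rr \<le> cc * x powr rr + y powr rr"
proof -
  have "-1 \<le> rr_gap cc 1 1 10.174"
  proof -
    have "6.3972509 \<le> (10.174::real) powr rr"
      by (rule ge_powr_rr_if_power5_le) (simp_all add: power_divide)
    then have "0.921600435 * 6.3972509 \<le> cc * (10.174::real) powr rr"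
      using cc_bounds by (intro mult_mono) auto
    moreover have "(11.174::real) powr rr \<le> 6.8955186"
      by (rule powr_rr_le_if_power4_le) (simp_all add: power_divide)
    ultimately show ?thesis by (simp add: rr_gap_def)
  qed
  moreover have "rr_gap cc 1 1 0 = -1"
    by (simp add: rr_gap_def rr_def)
  ultimately show ?thesis
    using powr_rr_ge_by_ratio_bounds[of cc 1 0 y x "10.174"] assms cc_pos cc_le_1 by simp
qed

lemma lemma2p4_real_iii:
  fixes x y :: real
  assumes "0 \<le> y" "0.5 * y \<le> x" "x \<le> 8.884 * y"
  shows "(1 + 1 / 10.174) powr rr * (x + y) powr rr \<le> x powr rr + y powr rr"
proof -
  define A where "A = (1 + 1 / 10.174) powr rr"
  have "1 \<le> A"
    unfolding A_def by (rule ge_one_powr_ge_zero) (auto simp: rr_def)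
  have "-1 \<le> rr_gap 1 A 1 0.5"
  proof -
    have "0.5743491 \<le> (0.5::real) powr rr"
      by (rule ge_powr_rr_if_power5_le) (simp_all add: power_divide)
    moreover have "A * 1.5 powr rr \<le> 1.4908933"
      unfolding A_def powr_mult[symmetric]
      by (rule powr_rr_le_if_power4_le) (simp_all add: power_divide)
    ultimately show ?thesis by (simp add: rr_gap_def)
  qed
  moreover have "-1 \<le> rr_gap 1 A 1 8.884"
  proof -
    have "5.7396688 \<le> (8.884::real) powr rr"
      by (rule ge_powr_rr_if_power5_le) (simp_all add: power_divide)
    moreover have "A * 9.884 powr rr \<le> 6.7378252"
      unfolding A_def powr_mult[symmetric]
      by (rule powr_rr_le_if_power4_le) (simp_all add: power_divide)
    ultimately show ?thesis by (simp add: rr_gap_def)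
  qed
  ultimately show ?thesis
    using powr_rr_ge_by_ratio_bounds[of 1 A "0.5" y x "8.884"] assms \<open>1 \<le> A\<close> by (simp add: A_def)
qed

lemma cc_mult_scaled_powr_rr_8_minus_6: "cc * (8 * z) powr rr - cc * (6 * z) powr rr = z powr rr"
proof -
  have "cc * (8 * z) powr rr - cc * (6 * z) powr rr = (cc * 8 powr rr - cc * 6 powr rr) * z powr rr"
    by (simp add: powr_mult algebra_simps)
  then show ?thesis
    using cc_mult_powr_rr_8_minus_6 by simp
qed

lemma lemma2p4_real_vi:
  fixes x y z :: real
  assumes "0 \<le> z" "6 * z \<le> x" "z \<le> y"
  shows "cc * (x + y + z) powr rr \<le> cc * x powr rr + y powr rr"
proof -
  have lower_x: "(x + y + z) powr rr - x powr rr \<le> (y + 7 * z) powr rr - (6 * z) powr rr"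
    using powr_rr_increment_antimono[of "y + z" "6 * z" x] assms by (simp add: algebra_simps)
  have lower_y: "(y + 7 * z) powr rr - y powr rr \<le> (8 * z) powr rr - z powr rr"
    using powr_rr_increment_antimono[of "7 * z" z y] assms by (simp add: algebra_simps)
  have "(8 * z) powr rr \<le> (y + 7 * z) powr rr"
    by (rule powr_mono2) (use assms in \<open>auto simp: rr_def\<close>)
  have "cc * ((x + y + z) powr rr - x powr rr) \<le> cc * ((y + 7 * z) powr rr - (6 * z) powr rr)"
    using lower_x cc_pos by (simp add: mult_left_mono)
  also have "\<dots> = cc * ((y + 7 * z) powr rr - (8 * z) powr rr) + z powr rr"
    using cc_mult_scaled_powr_rr_8_minus_6[of z] by (simp add: algebra_simps)
  also have "\<dots> \<le> ((y + 7 * z) powr rr - (8 * z) powr rr) + z powr rr"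
    using \<open>(8 * z) powr rr \<le> (y + 7 * z) powr rr\<close> cc_pos cc_le_1
    by (simp add: mult_left_le_one_le)
  also have "\<dots> \<le> y powr rr"
    using lower_y by simp
  finally show ?thesis
    by (simp add: algebra_simps)
qed

lemma cc_mult_scaled_powr_rr_4_minus_1: "cc * ((4 * w) powr rr - w powr rr) \<le> 2 * w powr rr"
proof -
  have "(4::real) powr rr \<le> 3.0314332"
    by (rule powr_rr_le_if_power4_le) (simp_all add: power_divide)
  then have "cc * (4 powr rr - 1) \<le> 0.921600437 * (3.0314332 - 1)"
    using cc_bounds cc_pos by (intro mult_mono) (auto simp: rr_def intro: ge_one_powr_ge_zero)
  then have "cc * (4 powr rr - 1) * w powr rr \<le> 2 * w powr rr"
    by (intro mult_right_mono[of _ 2, simplified]) auto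
  then show ?thesis
    by (simp add: powr_mult algebra_simps)
qed

lemma lemma2p4_real_v:
  fixes w x y z :: real
  assumes "0 \<le> w" "w \<le> x" "w \<le> y" "w \<le> z"
  shows "cc * (w + x + y + z) powr rr \<le> cc * x powr rr + y powr rr + z powr rr"
proof -
  have lower_x: "(w + x + y + z) powr rr - x powr rr \<le> (2 * w + y + z) powr rr - w powr rr"
    using powr_rr_increment_antimono[of "w + y + z" w x] assms by (simp add: algebra_simps)
  have lower_y: "(2 * w + y + z) powr rr - y powr rr \<le> (3 * w + z) powr rr - w powr rr"
    using powr_rr_increment_antimono[of "2 * w + z" w y] assms by (simp add: algebra_simps)
  have lower_z: "(3 * w + z) powr rr - z powr rr \<le> (4 * w) powr rr - w powr rr"
    using powr_rr_increment_antimono[of "3 * w" w z] assms by (simp add: algebra_simps)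
  have "(4 * w) powr rr \<le> (2 * w + y + z) powr rr"
    by (rule powr_mono2) (use assms in \<open>auto simp: rr_def\<close>)
  have "cc * ((w + x + y + z) powr rr - x powr rr) \<le> cc * ((2 * w + y + z) powr rr - w powr rr)"
    using lower_x cc_pos by (simp add: mult_left_mono)
  also have "\<dots> = cc * ((2 * w + y + z) powr rr - (4 * w) powr rr) + cc * ((4 * w) powr rr - w powr rr)"
    by (simp add: algebra_simps)
  also have "\<dots> \<le> ((2 * w + y + z) powr rr - (4 * w) powr rr) + 2 * w powr rr"
    using \<open>(4 * w) powr rr \<le> (2 * w + y + z) powr rr\<close> cc_pos cc_le_1
      cc_mult_scaled_powr_rr_4_minus_1[of w]
    by (intro add_mono) (simp_all add: mult_left_le_one_le)
  also have "\<dots> \<le> y powr rr + z powr rr"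
    using lower_y lower_z by simp
  finally show ?thesis
    by (simp add: algebra_simps)
qed

lemma rr_gap_cc_1_mono:
  assumes "0 \<le> S" "0 \<le> p" "p \<le> q" "q \<le> 1.98 * S"
  shows "rr_gap cc 1 S p \<le> rr_gap cc 1 S q"
proof (rule rr_gap_mono)
  have "(0.921600435::real) ^ 5 \<le> cc ^ 5"
    using cc_bounds by (intro power_mono) auto
  then have "1.98 * (1 - cc ^ 5) \<le> cc ^ 5" "cc ^ 5 \<le> 1"
    using cc_pos cc_le_1 by (simp_all add: power_divide power_le_one)
  fix u assume "p < u" "u < q"
  then have "(1 - cc ^ 5) * u \<le> (1 - cc ^ 5) * (1.98 * S)"
    using assms \<open>cc ^ 5 \<le> 1\<close> by (intro mult_left_mono) auto
  also have "\<dots> \<le> cc ^ 5 * S"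
    using mult_right_mono[OF \<open>1.98 * (1 - cc ^ 5) \<le> cc ^ 5\<close> \<open>0 \<le> S\<close>] by (simp add: algebra_simps)
  finally show "1 ^ 5 * u \<le> cc ^ 5 * (u + S)"
    by (simp add: algebra_simps)
qed (use assms cc_pos in auto)

lemma powr_rr_lemma2p4_iv_extremal:
  "(1374/259 * t) powr rr \<le> (1/2 * t) powr rr + 2 * (125/259 * t) powr rr + cc * (1471/518 * t) powr rr"
proof -
  have "0.5743491 \<le> (1/2::real) powr rr" "0.5583264 \<le> (125/259::real) powr rr"
    "2.3047633 \<le> (1471/518::real) powr rr"
    by (rule ge_powr_rr_if_power5_le; simp add: power_divide)+
  moreover have "(1374/259::real) powr rr \<le> 3.7997024"
    by (rule powr_rr_le_if_power4_le) (simp_all add: power_divide)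
  moreover have "0.921600435 * 2.3047633 \<le> cc * (1471/518::real) powr rr"
    using cc_bounds calculation by (intro mult_mono) auto
  ultimately have "(1374/259::real) powr rr * t powr rr
      \<le> ((1/2) powr rr + 2 * (125/259) powr rr + cc * (1471/518) powr rr) * t powr rr"
    by (intro mult_right_mono) simp_all
  then show ?thesis
    unfolding powr_mult by (simp add: algebra_simps)
qed

lemma lemma2p4_real_iv:
  fixes t w x y z :: real
  assumes "0 \<le> w" "0 \<le> x" "0 \<le> y" "0 \<le> z" "0 < t"
    and "z < 1.98 * (t + w + x + y)"
    and "t \<le> 2.072 * min (w / 1.036) (min x (min y (z / 5.884)))"
  shows "(t + w + x + y + z) powr rr \<le> w powr rr + x powr rr + y powr rr + cc * z powr rr"
proof -
  (* the least values of w, x and y, z allowed by the bound on t: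
     125/259 = 1/2.072 and 1471/518 = 5.884/2.072 *)
  define w0 where "w0 = 1/2 * t"
  define x0 where "x0 = 125/259 * t"
  define z0 where "z0 = 1471/518 * t"
  have "w0 \<le> w" "x0 \<le> x" "x0 \<le> y" "z0 \<le> z" "0 \<le> w0" "0 \<le> x0" "0 \<le> z0"
    using assms by (auto simp: w0_def x0_def z0_def)
  have lower_z: "rr_gap cc 1 (t + w + x + y) z0 \<le> rr_gap cc 1 (t + w + x + y) z"
    by (rule rr_gap_cc_1_mono) (use assms \<open>z0 \<le> z\<close> \<open>0 \<le> z0\<close> in auto)
  have lower_w: "(z0 + t + w + x + y) powr rr - w powr rr \<le> (z0 + t + w0 + x + y) powr rr - w0 powr rr"
    using powr_rr_increment_antimono[of "z0 + t + x + y" w0 w] assms \<open>w0 \<le> w\<close> \<open>0 \<le> w0\<close> \<open>0 \<le> z0\<close>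
    by (simp add: algebra_simps)
  have lower_x: "(z0 + t + w0 + x + y) powr rr - x powr rr \<le> (z0 + t + w0 + x0 + y) powr rr - x0 powr rr"
    using powr_rr_increment_antimono[of "z0 + t + w0 + y" x0 x] assms \<open>x0 \<le> x\<close> \<open>0 \<le> x0\<close> \<open>0 \<le> w0\<close> \<open>0 \<le> z0\<close>
    by (simp add: algebra_simps)
  have lower_y: "(z0 + t + w0 + x0 + y) powr rr - y powr rr \<le> (z0 + t + w0 + x0 + x0) powr rr - x0 powr rr"
    using powr_rr_increment_antimono[of "z0 + t + w0 + x0" x0 y] assms \<open>x0 \<le> y\<close> \<open>0 \<le> x0\<close> \<open>0 \<le> w0\<close> \<open>0 \<le> z0\<close>
    by (simp add: algebra_simps)
  have "z0 + t + w0 + x0 + x0 = 1374/259 * t"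
    by (simp add: w0_def x0_def z0_def)
  then have "(z0 + t + w0 + x0 + x0) powr rr \<le> w0 powr rr + 2 * x0 powr rr + cc * z0 powr rr"
    using powr_rr_lemma2p4_iv_extremal[of t] by (simp add: w0_def x0_def z0_def)
  with lower_z lower_w lower_x lower_y show ?thesis
    by (simp add: rr_gap_def algebra_simps)
qed

theorem lemma2p4:
  fixes t w x y z :: nat
  shows
   "(real x \<ge> 8.956 * real z \<and> real y \<ge> 1.036 * real z \<longrightarrow>
       real x powr rr + real y powr rr \<ge> real (x + y + z) powr rr)
  \<and> (real x \<le> 10.174 * real y \<longrightarrow>
       cc * real x powr rr + real y powr rr \<ge> real (x + y) powr rr)
  \<and> (0.5 * real y \<le> real x \<and> real x \<le> 8.884 * real y \<longrightarrow>
       real x powr rr + real y powr rr \<ge> (1 + 1 / 10.174) powr rr * real (x + y) powr rr)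
  \<and> (real z < 1.98 * real (t + w + x + y) \<and> 0 < t \<and>
      real t \<le> 2.072 * min (real w / 1.036) (min (real x) (min (real y) (real z / 5.884)))
      \<longrightarrow> real w powr rr + real x powr rr + real y powr rr + cc * real z powr rr
            \<ge> real (t + w + x + y + z) powr rr)
  \<and> (w \<le> min x (min y z) \<longrightarrow>
       cc * real x powr rr + real y powr rr + real z powr rr \<ge> cc * real (w + x + y + z) powr rr)
  \<and> (x \<ge> 6 * z \<and> y \<ge> z \<longrightarrow>
       cc * real x powr rr + real y powr rr \<ge> cc * real (x + y + z) powr rr)"
proof (intro conjI impI)
  assume "real x \<ge> 8.956 * real z \<and> real y \<ge> 1.036 * real z"
  then show "real x powr rr + real y powr rr \<ge> real (x + y + z) powr rr"
    using lemma2p4_real_i[of "real z" "real x" "real y"] by simp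
next
  assume "real x \<le> 10.174 * real y"
  then show "cc * real x powr rr + real y powr rr \<ge> real (x + y) powr rr"
    using lemma2p4_real_ii[of "real y" "real x"] by simp
next
  assume "0.5 * real y \<le> real x \<and> real x \<le> 8.884 * real y"
  then show "real x powr rr + real y powr rr \<ge> (1 + 1 / 10.174) powr rr * real (x + y) powr rr"
    using lemma2p4_real_iii[of "real y" "real x"] by simp
next
  assume "real z < 1.98 * real (t + w + x + y) \<and> 0 < t \<and>
      real t \<le> 2.072 * min (real w / 1.036) (min (real x) (min (real y) (real z / 5.884)))"
  then show "real w powr rr + real x powr rr + real y powr rr + cc * real z powr rr
      \<ge> real (t + w + x + y + z) powr rr"
    using lemma2p4_real_iv[of "real w" "real x" "real y" "real z" "real t"] by simp
next
  assume "w \<le> min x (min y z)"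
  then show "cc * real x powr rr + real y powr rr + real z powr rr \<ge> cc * real (w + x + y + z) powr rr"
    using lemma2p4_real_v[of "real w" "real x" "real y" "real z"] by simp
next
  assume "x \<ge> 6 * z \<and> y \<ge> z"
  then show "cc * real x powr rr + real y powr rr \<ge> cc * real (x + y + z) powr rr"
    using lemma2p4_real_vi[of "real z" "real x" "real y"] by simp
qed

end
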